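(* Consider the $l$-th cycle of RPF-SFISTA with $\mu=\mu_{l-1}$, and let $\gamma_j(x):=\phi(y_j)+2[\ell_f(y_j;\tilde x_{j-1})-f(y_j)]+\langle s_j,x-y_j\rangle+\frac{\mu}{4}\|x-y_j\|^2$. Then for every iteration index $j\ge1$ generated in this cycle and every $x\in\mathbb R^n$, $$A_{j-1}\gamma_j(y_{j-1})+a_{j-1}\gamma_j(x)+\frac{\tau_{j-1}}{2}\|x_{j-1}-x\|^2-\frac{\tau_j}{2}\|x_j-x\|^2\ \ge\ A_j\phi(y_j)+\frac{\chi A_jL_j}{2}\|y_j-\tilde x_{j-1}\|^2.$$
   Context: Setup. Let $f:\mathbb R^n\to\mathbb R$ be convex and differentiable with $\|\nabla f(z')-\nabla f(z)\|\le\bar L\|z'-z\|$ for all $z,z'\in\mathbb R^n$ (some $\bar L\ge0$). Let $h:\mathbb R^n\to(-\infty,\infty]$ be proper, lower semicontinuous and convex with domain $\mathcal H$. Let $\phi:=f+h$ be $\bar\mu$-strongly convex for some $\bar\mu>0$. Write $\ell_f(u;x):=f(x)+\langle\nabla f(x),u-x\rangle$. RPF-SFISTA. Parameters $\chi\in(0,1)$, $\beta>1$; inputs $\mu_0>0$, $\bar M_0>0$, $z_0\in\mathcal H$, $\hat\epsilon>0$. The method runs in cycles $l=1,2,\dots$. At the start of cycle $l$: choose $\underline M_l\in[\max\{\bar M_{l-1}/4,\bar M_0\},\bar M_{l-1}]$ (so $\underline M_1=\bar M_0$), set $\mu:=\mu_{l-1}$, $x_0:=z_{l-1}$, $\xi_0:=y_0:=x_0$,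 $A_0:=0$, $\tau_0:=1$, $L_0:=\underline M_l$. Then for $j=1,2,\dots$: (i) set $L_j:=L_{j-1}$; (ii) compute $a_{j-1}=\frac{\tau_{j-1}+\sqrt{\tau_{j-1}^2+4\tau_{j-1}A_{j-1}L_j}}{2L_j}$, $\tilde x_{j-1}=\frac{A_{j-1}y_{j-1}+a_{j-1}x_{j-1}}{A_{j-1}+a_{j-1}}$, $y_j=\arg\min_{u}\{\ell_f(u;\tilde x_{j-1})+h(u)+\frac{L_j}{2}\|u-\tilde x_{j-1}\|^2\}$; if $f(y_j)\le\ell_f(y_j;\tilde x_{j-1})+\frac{(1-\chi)L_j}{4}\|y_j-\tilde x_{j-1}\|^2$ go to (iii), otherwise replace $L_j$ by $\beta L_j$ and repeat (ii); (iii) set $\xi_j:=y_j$ if $\phi(y_j)\le\phi(\xi_{j-1})$ and $\xi_j:=\xi_{j-1}$ otherwise; $A_j:=A_{j-1}+a_{j-1}$; $\tau_j:=\tau_{j-1}+a_{j-1}\mu/2$; $s_j:=L_j(\tilde x_{j-1}-y_j)$; $x_j:=\tau_j^{-1}[\mu a_{j-1}y_j/2+\tau_{j-1}x_{j-1}-a_{j-1}s_j]$; $v_j:=\nabla f(y_j)-\nabla f(\tilde x_{j-1})+s_j$; (iv) if $\|\xi_j-x_0\|^2<\chi A_jL_j\|y_j-\tilde x_{j-1}\|^2$, the cycle ends with a restart: set $z_l:=\xi_j$, $\bar M_l:=L_j$, $\mu_l:=\mu/2$ and start cycle $l+1$; (v) otherwise, if $\|v_j\|\le\hat\epsilon$,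 stop and output $(y,v,\xi,L):=(y_j,v_j,\xi_j,L_j)$; else go to iteration $j+1$. In these formulas $L_j$, $a_{j-1}$, $\tilde x_{j-1}$, $y_j$ denote the final (accepted) values after the line search in (ii). *)

theory Defs
  imports "HOL-Analysis.Analysis"
begin

text \<open>The extended-valued function h : R^n -> (-inf,inf] with domain H is
represented by a real-valued function h together with its domain H; h is understood to be
+inf outside H. Sequences are indexed so that a i, xt i stand for a_i, tilde x_i.\<close>

definition lin_f :: "('a::real_inner \<Rightarrow> real) \<Rightarrow> ('a \<Rightarrow> 'a) \<Rightarrow> 'a \<Rightarrow> 'a \<Rightarrow> real" where
  "lin_f f gf u x = f x + inner (gf x) (u - x)"

definition proper_lsc_convex :: "('a::real_normed_vector \<Rightarrow> real) \<Rightarrow> 'a set \<Rightarrow> bool" where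
  "proper_lsc_convex h H \<longleftrightarrow> H \<noteq> {} \<and> convex H \<and> convex_on H h \<and>
     (\<forall>c::real. closed {x \<in> H. h x \<le> c})"

definition strongly_convex_ext :: "real \<Rightarrow> ('a::real_inner \<Rightarrow> real) \<Rightarrow> 'a set \<Rightarrow> bool" where
  "strongly_convex_ext m phi D \<longleftrightarrow> convex D \<and>
     (\<forall>x\<in>D. \<forall>y\<in>D. \<forall>t::real. 0 \<le> t \<and> t \<le> 1 \<longrightarrow>
        phi (t *\<^sub>R x + (1 - t) *\<^sub>R y) \<le> t * phi x + (1 - t) * phi y - m / 2 * t * (1 - t) * (norm (x - y))\<^sup>2)"

definition acoef :: "real \<Rightarrow> real \<Rightarrow> real \<Rightarrow> real" where
  "acoef tau A L = (tau + sqrt (tau\<^sup>2 + 4 * tau * A * L)) / (2 * L)"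

definition xtil :: "real \<Rightarrow> 'a::real_vector \<Rightarrow> real \<Rightarrow> 'a \<Rightarrow> 'a" where
  "xtil A y a x = (1 / (A + a)) *\<^sub>R (A *\<^sub>R y + a *\<^sub>R x)"

definition is_prox_pt :: "('a::real_inner \<Rightarrow> real) \<Rightarrow> ('a \<Rightarrow> 'a) \<Rightarrow> ('a \<Rightarrow> real) \<Rightarrow> 'a set
    \<Rightarrow> real \<Rightarrow> 'a \<Rightarrow> 'a \<Rightarrow> bool" where
  "is_prox_pt f gf h H L xt u \<longleftrightarrow> u \<in> H \<and>
     (\<forall>w\<in>H. lin_f f gf u xt + h u + L / 2 * (norm (u - xt))\<^sup>2
              \<le> lin_f f gf w xt + h w + L / 2 * (norm (w - xt))\<^sup>2)"

definition ls_ok :: "('a::real_inner \<Rightarrow> real) \<Rightarrow> ('a \<Rightarrow> 'a) \<Rightarrow> real \<Rightarrow> real \<Rightarrow> 'a \<Rightarrow> 'a \<Rightarrow> bool" where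
  "ls_ok f gf chi L xt y \<longleftrightarrow> f y \<le> lin_f f gf y xt + (1 - chi) * L / 4 * (norm (y - xt))\<^sup>2"

definition gamma_fn :: "('a::real_inner \<Rightarrow> real) \<Rightarrow> ('a \<Rightarrow> 'a) \<Rightarrow> ('a \<Rightarrow> real) \<Rightarrow> real
    \<Rightarrow> 'a \<Rightarrow> 'a \<Rightarrow> 'a \<Rightarrow> 'a \<Rightarrow> real" where
  "gamma_fn f gf h mu xt y s x = f y + h y + 2 * (lin_f f gf y xt - f y) + inner s (x - y)
      + mu / 4 * (norm (x - y))\<^sup>2"

end

theory Submission
  imports Defs
begin

text \<open>The inequality is pure algebra on one step of the method.
Write \<open>\<gamma>\<^sub>j(x) = c + \<langle>s\<^sub>j, x - y\<^sub>j\<rangle> + \<mu>/4 \<parallel>x - y\<^sub>j\<parallel>\<^sup>2\<close> with the constant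
\<open>c = \<phi>(y\<^sub>j) + 2[\<ell>\<^sub>f(y\<^sub>j; xt\<^sub>j\<^sub>-\<^sub>1) - f(y\<^sub>j)]\<close>. Since \<open>\<tau>\<^sub>j = \<tau>\<^sub>j\<^sub>-\<^sub>1 + a\<^sub>j\<^sub>-\<^sub>1\<mu>/2\<close> and \<open>x\<^sub>j\<close>
minimises \<open>a\<^sub>j\<^sub>-\<^sub>1\<gamma>\<^sub>j + \<tau>\<^sub>j\<^sub>-\<^sub>1/2 \<parallel>x\<^sub>j\<^sub>-\<^sub>1 - \<cdot>\<parallel>\<^sup>2\<close>, the left-hand side does not depend on \<open>x\<close>, so we may
take \<open>x = x\<^sub>j\<close>. Dropping the \<open>\<mu>\<close>-terms, the linear parts combine into \<open>A\<^sub>j\<langle>s\<^sub>j, u - y\<^sub>j\<rangle>\<close> for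
\<open>u = (A\<^sub>j\<^sub>-\<^sub>1 y\<^sub>j\<^sub>-\<^sub>1 + a\<^sub>j\<^sub>-\<^sub>1 x\<^sub>j)/A\<^sub>j\<close>, and the equation \<open>L a\<^sup>2 = \<tau>(A + a)\<close> defining the step size turns
\<open>\<tau>\<^sub>j\<^sub>-\<^sub>1/2 \<parallel>x\<^sub>j\<^sub>-\<^sub>1 - x\<^sub>j\<parallel>\<^sup>2\<close> into \<open>A\<^sub>j L\<^sub>j/2 \<parallel>u - xt\<^sub>j\<^sub>-\<^sub>1\<parallel>\<^sup>2\<close>. Because
\<open>s\<^sub>j = L\<^sub>j(xt\<^sub>j\<^sub>-\<^sub>1 - y\<^sub>j)\<close>, what remains is at least \<open>A\<^sub>j(c + L\<^sub>j/2 \<parallel>y\<^sub>j - xt\<^sub>j\<^sub>-\<^sub>1\<parallel>\<^sup>2)\<close>,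
and the line-search test bounds \<open>c - \<phi>(y\<^sub>j)\<close> from below.\<close>

lemma acoef_pos:
  assumes "L > 0" "tau > 0" "A \<ge> 0"
  shows "acoef tau A L > 0"
  using assms by (simp add: acoef_def add_pos_nonneg)

lemma acoef_equation:
  assumes "L > 0" "tau > 0" "A \<ge> 0"
  shows "L * (acoef tau A L)\<^sup>2 = tau * (A + acoef tau A L)"
proof -
  define r where "r = sqrt (tau\<^sup>2 + 4 * tau * A * L)"
  have r: "r\<^sup>2 = tau\<^sup>2 + 4 * tau * A * L"
    unfolding r_def using assms by simp
  have a: "acoef tau A L = (tau + r) / (2 * L)"
    by (simp add: acoef_def r_def)
  show ?thesis
    unfolding a using assms(1) r by (simp add: field_simps power2_eq_square)
qed

lemma ls_ok_linearization_bound: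
  assumes "ls_ok f gf chi L xt y"
  shows "chi * L / 2 * (norm (y - xt))\<^sup>2
           \<le> 2 * (lin_f f gf y xt - f y) + L / 2 * (norm (y - xt))\<^sup>2"
  using assms unfolding ls_ok_def by (simp add: field_simps)

lemma gradient_step_three_point:
  fixes u y xt :: "'a::real_inner"
  shows "inner (L *\<^sub>R (xt - y)) (u - y) + L / 2 * (norm (u - xt))\<^sup>2
           = L / 2 * (norm (u - y))\<^sup>2 + L / 2 * (norm (y - xt))\<^sup>2"
  by (simp add: power2_norm_eq_inner inner_diff_left inner_diff_right inner_commute
      algebra_simps)

text \<open>Completing the square: the quadratic in \<open>w\<close> on the left has leading coefficient
\<open>a\<mu>/4 + \<tau>'/2 = \<tau>/2\<close> and its minimiser is \<open>x\<^sub>j\<close>.\<close>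

lemma estimate_step_complete_square:
  fixes y x' xj s w :: "'a::real_inner"
  assumes tau: "tau = tau' + a * mu / 2" "tau \<noteq> 0"
    and xj: "xj = (1 / tau) *\<^sub>R ((mu * a / 2) *\<^sub>R y + tau' *\<^sub>R x' - a *\<^sub>R s)"
  shows "a * (c + inner s (w - y) + mu / 4 * (norm (w - y))\<^sup>2)
           + tau' / 2 * (norm (x' - w))\<^sup>2 - tau / 2 * (norm (xj - w))\<^sup>2
         = a * (c + inner s (xj - y) + mu / 4 * (norm (xj - y))\<^sup>2)
           + tau' / 2 * (norm (x' - xj))\<^sup>2"
proof -
  have "tau *\<^sub>R xj = (mu * a / 2) *\<^sub>R y + tau' *\<^sub>R x' - a *\<^sub>R s"
    using xj tau(2) by simp
  then have "tau *\<^sub>R xj - (mu * a / 2) *\<^sub>R y - tau' *\<^sub>R x' + a *\<^sub>R s = 0"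
    by (simp add: algebra_simps)
  then have "inner (w - xj) (tau *\<^sub>R xj - (mu * a / 2) *\<^sub>R y - tau' *\<^sub>R x' + a *\<^sub>R s) = 0"
    by simp
  then have optimality:
    "tau * inner w xj - tau * inner xj xj - (mu * a / 2) * inner w y + (mu * a / 2) * inner xj y
       - tau' * inner w x' + tau' * inner xj x' + a * inner w s - a * inner xj s = 0"
    by (simp add: inner_diff_left inner_diff_right inner_add_left inner_add_right
        algebra_simps inner_commute) (simp add: field_simps)
  show ?thesis
    using optimality unfolding tau(1)
    by (simp add: power2_norm_eq_inner inner_diff_left inner_diff_right inner_commute
        algebra_simps) (simp add: field_simps)
qed

lemma aggregate_model_lower_bound:
  fixes y y' x' xj xt :: "'a::real_inner"
  assumes L: "L \<ge> 0" and A': "A' \<ge> 0" and a: "a > 0" and mu: "mu \<ge> 0"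
    and aeq: "L * a\<^sup>2 = tau' * (A' + a)"
    and xt: "xt = (1 / (A' + a)) *\<^sub>R (A' *\<^sub>R y' + a *\<^sub>R x')"
  shows "(A' + a) * (c + L / 2 * (norm (y - xt))\<^sup>2)
    \<le> A' * (c + inner (L *\<^sub>R (xt - y)) (y' - y) + mu / 4 * (norm (y' - y))\<^sup>2)
       + a * (c + inner (L *\<^sub>R (xt - y)) (xj - y) + mu / 4 * (norm (xj - y))\<^sup>2)
       + tau' / 2 * (norm (x' - xj))\<^sup>2"
proof -
  define A where "A = A' + a"
  define s where "s = L *\<^sub>R (xt - y)"
  define u where "u = (1 / A) *\<^sub>R (A' *\<^sub>R y' + a *\<^sub>R xj)"
  have A: "A > 0" using A' a by (simp add: A_def)
  have Au: "A *\<^sub>R u = A' *\<^sub>R y' + a *\<^sub>R xj" using A by (simp add: u_def)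
  have Axt: "A *\<^sub>R xt = A' *\<^sub>R y' + a *\<^sub>R x'" using A by (simp add: xt A_def)
  have linear: "A' * inner s (y' - y) + a * inner s (xj - y) = A * inner s (u - y)"
  proof -
    have "A *\<^sub>R (u - y) = A' *\<^sub>R (y' - y) + a *\<^sub>R (xj - y)"
      using Au by (simp add: A_def algebra_simps)
    then show ?thesis by (metis inner_add_right inner_scaleR_right)
  qed
  have "A *\<^sub>R (u - xt) = a *\<^sub>R (xj - x')"
    using Au Axt by (simp add: algebra_simps)
  then have "(1 / A) *\<^sub>R (A *\<^sub>R (u - xt)) = (1 / A) *\<^sub>R (a *\<^sub>R (xj - x'))"
    by simp
  then have "u - xt = (a / A) *\<^sub>R (xj - x')"
    using A by simp
  then have "(norm (u - xt))\<^sup>2 = (a / A)\<^sup>2 * (norm (x' - xj))\<^sup>2"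
    by (simp add: power_mult_distrib power_divide norm_minus_commute)
  then have "A * (L / 2 * (norm (u - xt))\<^sup>2) = L * a\<^sup>2 / (2 * A) * (norm (x' - xj))\<^sup>2"
    using A by (simp add: field_simps power2_eq_square)
  also have "\<dots> = tau' / 2 * (norm (x' - xj))\<^sup>2"
    using aeq A unfolding A_def by (simp add: field_simps)
  finally have distance: "tau' / 2 * (norm (x' - xj))\<^sup>2 = A * (L / 2 * (norm (u - xt))\<^sup>2)"
    by simp
  have "A * (c + L / 2 * (norm (y - xt))\<^sup>2)
        \<le> A * (c + inner s (u - y) + L / 2 * (norm (u - xt))\<^sup>2)"
    using gradient_step_three_point[of L xt y u] A L by (simp add: s_def)
  also have "\<dots> \<le> A' * (c + inner s (y' - y) + mu / 4 * (norm (y' - y))\<^sup>2)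
       + a * (c + inner s (xj - y) + mu / 4 * (norm (xj - y))\<^sup>2) + tau' / 2 * (norm (x' - xj))\<^sup>2"
  proof -
    have "0 \<le> A' * (mu / 4 * (norm (y' - y))\<^sup>2)" "0 \<le> a * (mu / 4 * (norm (xj - y))\<^sup>2)"
      using A' a mu by simp_all
    then show ?thesis
      using linear distance by (simp add: A_def algebra_simps)
  qed
  finally show ?thesis by (simp add: A_def s_def)
qed

lemma estimate_step_inequality:
  fixes y y' x' xj xt w :: "'a::real_inner"
  assumes L: "L \<ge> 0" and tau': "tau' > 0" and A': "A' \<ge> 0" and a: "a > 0" and mu: "mu \<ge> 0"
    and aeq: "L * a\<^sup>2 = tau' * (A' + a)" and tau: "tau = tau' + a * mu / 2"
    and xj: "xj = (1 / tau) *\<^sub>R ((mu * a / 2) *\<^sub>R y + tau' *\<^sub>R x' - a *\<^sub>R s)"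
    and s: "s = L *\<^sub>R (xt - y)"
    and xt: "xt = (1 / (A' + a)) *\<^sub>R (A' *\<^sub>R y' + a *\<^sub>R x')"
    and ls: "phi + chi * L / 2 * (norm (y - xt))\<^sup>2 \<le> c + L / 2 * (norm (y - xt))\<^sup>2"
  shows "(A' + a) * phi + chi * (A' + a) * L / 2 * (norm (y - xt))\<^sup>2
    \<le> A' * (c + inner s (y' - y) + mu / 4 * (norm (y' - y))\<^sup>2)
       + a * (c + inner s (w - y) + mu / 4 * (norm (w - y))\<^sup>2)
       + tau' / 2 * (norm (x' - w))\<^sup>2 - tau / 2 * (norm (xj - w))\<^sup>2"
proof -
  have "tau > 0" using tau tau' a mu by (simp add: add_pos_nonneg)
  have "(A' + a) * phi + chi * (A' + a) * L / 2 * (norm (y - xt))\<^sup>2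
        \<le> (A' + a) * (c + L / 2 * (norm (y - xt))\<^sup>2)"
    using mult_left_mono[OF ls, of "A' + a"] A' a by (simp add: algebra_simps)
  also have "\<dots> \<le> A' * (c + inner s (y' - y) + mu / 4 * (norm (y' - y))\<^sup>2)
       + a * (c + inner s (xj - y) + mu / 4 * (norm (xj - y))\<^sup>2) + tau' / 2 * (norm (x' - xj))\<^sup>2"
    unfolding s by (rule aggregate_model_lower_bound[OF L A' a mu aeq xt])
  also have "\<dots> = A' * (c + inner s (y' - y) + mu / 4 * (norm (y' - y))\<^sup>2)
       + a * (c + inner s (w - y) + mu / 4 * (norm (w - y))\<^sup>2)
       + tau' / 2 * (norm (x' - w))\<^sup>2 - tau / 2 * (norm (xj - w))\<^sup>2"
    using estimate_step_complete_square[OF tau _ xj, of c w] \<open>tau > 0\<close> by simp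
  finally show ?thesis .
qed

theorem lemmaA3:
  fixes f :: "real^'n \<Rightarrow> real" and gf :: "real^'n \<Rightarrow> real^'n"
    and h :: "real^'n \<Rightarrow> real" and H :: "(real^'n) set"
    and Lbar mubar chi beta mu M :: real and z0 :: "real^'n"
    and A tau a L :: "nat \<Rightarrow> real" and x y xt s :: "nat \<Rightarrow> real^'n" and j :: nat
  assumes f_diff: "\<And>z. (f has_derivative (\<lambda>v. inner (gf z) v)) (at z)"
    and f_conv: "convex_on UNIV f"
    and f_lip: "Lbar \<ge> 0" "\<And>z z'. norm (gf z' - gf z) \<le> Lbar * norm (z' - z)"
    and h_ok: "proper_lsc_convex h H"
    and phi_sc: "mubar > 0" "strongly_convex_ext mubar (\<lambda>u. f u + h u) H"
    and chi: "0 < chi" "chi < 1" and beta: "beta > 1"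
    and mu: "mu > 0" and M: "M > 0" and z0: "z0 \<in> H"
    and init: "x 0 = z0" "y 0 = z0" "A 0 = 0" "tau 0 = 1" "L 0 = M"
    and linesearch: "\<And>i. 1 \<le> i \<Longrightarrow> i \<le> j \<Longrightarrow>
        \<exists>k::nat. L i = beta ^ k * L (i - 1) \<and>
          (\<forall>k'<k. \<forall>u. is_prox_pt f gf h H (beta ^ k' * L (i - 1))
                    (xtil (A (i - 1)) (y (i - 1)) (acoef (tau (i - 1)) (A (i - 1)) (beta ^ k' * L (i - 1))) (x (i - 1))) u
                 \<longrightarrow> \<not> ls_ok f gf chi (beta ^ k' * L (i - 1))
                    (xtil (A (i - 1)) (y (i - 1)) (acoef (tau (i - 1)) (A (i - 1)) (beta ^ k' * L (i - 1))) (x (i - 1))) u)"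
    and a_def: "\<And>i. 1 \<le> i \<Longrightarrow> i \<le> j \<Longrightarrow> a (i - 1) = acoef (tau (i - 1)) (A (i - 1)) (L i)"
    and xt_def: "\<And>i. 1 \<le> i \<Longrightarrow> i \<le> j \<Longrightarrow> xt (i - 1) = xtil (A (i - 1)) (y (i - 1)) (a (i - 1)) (x (i - 1))"
    and y_def: "\<And>i. 1 \<le> i \<Longrightarrow> i \<le> j \<Longrightarrow> is_prox_pt f gf h H (L i) (xt (i - 1)) (y i)"
    and accept: "\<And>i. 1 \<le> i \<Longrightarrow> i \<le> j \<Longrightarrow> ls_ok f gf chi (L i) (xt (i - 1)) (y i)"
    and A_def: "\<And>i. 1 \<le> i \<Longrightarrow> i \<le> j \<Longrightarrow> A i = A (i - 1) + a (i - 1)"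
    and tau_def: "\<And>i. 1 \<le> i \<Longrightarrow> i \<le> j \<Longrightarrow> tau i = tau (i - 1) + a (i - 1) * mu / 2"
    and s_def: "\<And>i. 1 \<le> i \<Longrightarrow> i \<le> j \<Longrightarrow> s i = L i *\<^sub>R (xt (i - 1) - y i)"
    and x_def: "\<And>i. 1 \<le> i \<Longrightarrow> i \<le> j \<Longrightarrow>
        x i = (1 / tau i) *\<^sub>R ((mu * a (i - 1) / 2) *\<^sub>R y i + tau (i - 1) *\<^sub>R x (i - 1) - a (i - 1) *\<^sub>R s i)"
    and j: "1 \<le> j"
  shows "\<forall>w::real^'n.
     A (j - 1) * gamma_fn f gf h mu (xt (j - 1)) (y j) (s j) (y (j - 1))
       + a (j - 1) * gamma_fn f gf h mu (xt (j - 1)) (y j) (s j) w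
       + tau (j - 1) / 2 * (norm (x (j - 1) - w))\<^sup>2 - tau j / 2 * (norm (x j - w))\<^sup>2
     \<ge> A j * (f (y j) + h (y j)) + chi * A j * L j / 2 * (norm (y j - xt (j - 1)))\<^sup>2"
proof
  fix w :: "real^'n"
  have positive: "L i > 0 \<and> tau i > 0 \<and> A i \<ge> 0" if "i \<le> j" for i
    using that
  proof (induction i)
    case 0
    then show ?case using init M by simp
  next
    case (Suc i)
    then have IH: "L i > 0" "tau i > 0" "A i \<ge> 0" by auto
    obtain k where "L (Suc i) = beta ^ k * L i" using linesearch[of "Suc i"] Suc.prems by auto
    then have L: "L (Suc i) > 0" using IH beta by simp
    then have "a i > 0" using a_def[of "Suc i"] Suc.prems acoef_pos IH by simp
    then show ?case
      using L IH mu tau_def[of "Suc i"] A_def[of "Suc i"] Suc.prems by (simp add: add_pos_pos)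
  qed
  obtain p where p: "j = Suc p" using j by (cases j) auto
  have L: "L j > 0" and tau: "tau p > 0" and A: "A p \<ge> 0" using positive[of j] positive[of p] p by auto
  have a: "a p = acoef (tau p) (A p) (L j)" using a_def[of j] p by simp
  have step:
    "tau j = tau p + a p * mu / 2"
    "x j = (1 / tau j) *\<^sub>R ((mu * a p / 2) *\<^sub>R y j + tau p *\<^sub>R x p - a p *\<^sub>R s j)"
    "s j = L j *\<^sub>R (xt p - y j)"
    "xt p = (1 / (A p + a p)) *\<^sub>R (A p *\<^sub>R y p + a p *\<^sub>R x p)"
    "A j = A p + a p"
    using tau_def[of j] x_def[of j] s_def[of j] xt_def[of j] A_def[of j] p
    by (simp_all add: xtil_def)
  have ls: "f (y j) + h (y j) + chi * L j / 2 * (norm (y j - xt p))\<^sup>2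
      \<le> f (y j) + h (y j) + 2 * (lin_f f gf (y j) (xt p) - f (y j)) + L j / 2 * (norm (y j - xt p))\<^sup>2"
    using ls_ok_linearization_bound[OF accept[of j]] p by simp
  have "A j * (f (y j) + h (y j)) + chi * A j * L j / 2 * (norm (y j - xt p))\<^sup>2
     \<le> A p * gamma_fn f gf h mu (xt p) (y j) (s j) (y p) + a p * gamma_fn f gf h mu (xt p) (y j) (s j) w
       + tau p / 2 * (norm (x p - w))\<^sup>2 - tau j / 2 * (norm (x j - w))\<^sup>2"
    using estimate_step_inequality[OF less_imp_le[OF L] tau A acoef_pos[OF L tau A, folded a] less_imp_le[OF mu]
        acoef_equation[OF L tau A, folded a] step(1-4) ls, where w = w] step(5)
    by (simp add: gamma_fn_def add.assoc)
  then show "A (j - 1) * gamma_fn f gf h mu (xt (j - 1)) (y j) (s j) (y (j - 1))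
       + a (j - 1) * gamma_fn f gf h mu (xt (j - 1)) (y j) (s j) w
       + tau (j - 1) / 2 * (norm (x (j - 1) - w))\<^sup>2 - tau j / 2 * (norm (x j - w))\<^sup>2
     \<ge> A j * (f (y j) + h (y j)) + chi * A j * L j / 2 * (norm (y j - xt (j - 1)))\<^sup>2"
    by (simp add: p)
qed

end
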